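(* Let $\mathfrak M$ (modelled on $X$) be a Banach manifold with chart family $\mathscr A$ and $\mathfrak M_0$ (modelled on $X_0$) a $C^1$-embedded Banach submanifold of $\mathfrak M$ with respect to $\mathscr A$, such that $(\mathfrak M,\mathfrak M_0,\mathscr A)$ is inward spreadable. Let $\eta\in\mathfrak M_0$ and let $f:(-\varepsilon,\varepsilon)\to\mathfrak M_0$ with $f(0)=\eta$ be strongly differentiable at $t=0$. Then $f$ is fully differentiable at $t=0$: for every $\mathfrak M_0$-regular chart $(\mathcal U,\varphi)$ at $\eta$ the map $t\mapsto\varphi(f(t))$ is differentiable at $t=0$ in the topology of $X$, and for any two $\mathfrak M_0$-regular charts $(\mathcal U,\varphi),(\mathcal V,\psi)$ at $\eta$, $$(\psi\circ f)'(0)=(\psi\circ\varphi^{-1})'(\varphi(\eta))\,(\varphi\circ f)'(0).$$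
   Context: Densely embedded spaces and the class $\mathfrak C^k$. For Banach spaces $X$ and $X_0$, $X_0$ is a densely embedded Banach subspace of $X$ if $X_0$ is a dense linear subspace of $X$ and there is $C>0$ with $\|x\|_X\le C\|x\|_{X_0}$ for $x\in X_0$. For such $X_0\subseteq X$, a Banach space $Y$, an open set $U_0\subseteq X_0$ and an integer $k\ge1$, $\mathfrak C^k(U_0;X,Y)$ denotes the set of maps $F:U_0\to Y$ such that (i) for each $x_0\in U_0$ there are bounded symmetric $j$-linear maps $F^{(j)}(x_0):X^j\to Y$, $1\le j\le k$, with $\|F(x)-F(x_0)-\sum_{j=1}^k\frac1{j!}F^{(j)}(x_0)(x-x_0,\dots,x-x_0)\|_Y/\|x-x_0\|_{X_0}^k\to0$ as $\|x-x_0\|_{X_0}\to0$, and (ii) $x\mapsto F^{(j)}(x)$ is continuous from $U_0$ (with the $X_0$-topology) into the space $L^j(X,Y)$ of bounded $j$-linear maps. We write $F'=F^{(1)}$. Embedded submanifolds. Let $\mathfrak M,\mathfrak M_0$ be topological Banach manifolds modelled on $X$, $X_0$, let $\mathscr A$ be a family of local charts of $\mathfrak M$, and $k\ge1$. $\mathfrak M_0$ is a $C^k$-embedded Banach submanifold of $\mathfrak M$ with respect to $\mathscr A$ if: (D1) $X_0$ is a densely embedded Banach subspace of $X$; (D2) $\mathfrak M_0\subseteq\mathfrak M$ and $\mathcal U\cap\mathfrak M_0$ is open in $\mathfrak M_0$ for every open $\mathcal U\subseteq\mathfrak M$; (D3) the domains of the charts of $\mathscr A$ cover $\mathfrak M$;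 (D4) for $\eta\in\mathfrak M_0$ and $(\mathcal U,\varphi)\in\mathscr A$ with $\eta\in\mathcal U$, $(\mathcal U_0,\varphi|_{\mathcal U_0})$ with $\mathcal U_0:=\mathcal U\cap\mathfrak M_0$ is a local chart of $\mathfrak M_0$; (D5) for $\eta\in\mathfrak M_0$ and $(\mathcal U,\varphi),(\mathcal V,\psi)\in\mathscr A$ with $\eta\in\mathcal U\cap\mathcal V$, $\psi\circ\varphi^{-1}\in\mathfrak C^k(\varphi(\mathcal U_0\cap\mathcal V_0);X,X)$ and $\varphi\circ\psi^{-1}\in\mathfrak C^k(\psi(\mathcal U_0\cap\mathcal V_0);X,X)$. A chart of $\mathscr A$ whose domain contains $\eta$ is an $\mathfrak M_0$-regular local chart at $\eta$. $(\mathfrak M,\mathfrak M_0,\mathscr A)$ (with $\mathfrak M_0$ $C^1$-embedded) is inward spreadable if there is a Banach manifold $\mathfrak M_1\subseteq\mathfrak M_0$, modelled on a Banach space $X_1$, which is a $C^1$-embedded Banach submanifold of $\mathfrak M_0$ with respect to the restrictions to $\mathfrak M_0$ of the charts of $\mathscr A$ ($\mathfrak M_1$ is then an inner $C^1$-kernel and the charts of $\mathscr A$ are called $(\mathfrak M_0,\mathfrak M_1)$-regular). For charts at $\eta\in\mathfrak M_0$, $(\varphi\circ\psi^{-1})'(\psi(\eta))\in L(X)$ is the first derivative in the $\mathfrak C^1$ sense. A curve $f:(-\varepsilon,\varepsilon)\to\mathfrak M_0$ with $f(0)=\eta$ is strongly differentiable at $t=0$ if for some $\mathfrak M_0$-regular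 chart $\varphi$ at $\eta$, $t\mapsto\varphi(f(t))$ is differentiable at $t=0$ in the topology of $X_0$. *)

theory Defs
  imports "HOL-Analysis.Analysis"
begin

text \<open>A densely embedded
Banach subspace X0 of X is represented by a separate type 'b together with an
injective bounded linear map iota into X with dense range (so that
norm (iota x) <= C * norm x).\<close>

definition dense_embedding :: "('b::banach \<Rightarrow> 'a::banach) \<Rightarrow> bool" where
  "dense_embedding \<iota> \<longleftrightarrow> bounded_linear \<iota> \<and> inj \<iota> \<and> closure (range \<iota>) = UNIV"

definition chart :: "'m topology \<Rightarrow> 'm set \<Rightarrow> ('m \<Rightarrow> 'a::banach) \<Rightarrow> bool" where
  "chart M U \<phi> \<longleftrightarrow> openin M U \<and> open (\<phi> ` U) \<and>
     homeomorphic_map (subtopology M U) (top_of_set (\<phi> ` U)) \<phi>"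

definition banach_manifold :: "'a::banach itself \<Rightarrow> 'm topology \<Rightarrow> bool" where
  "banach_manifold (_::'a itself) M \<longleftrightarrow> Hausdorff_space M \<and>
     (\<forall>p\<in>topspace M. \<exists>U (\<phi>::'m \<Rightarrow> 'a). chart M U \<phi> \<and> p \<in> U)"

definition C1_deriv_at :: "('b::banach \<Rightarrow> 'a::banach) \<Rightarrow> ('b \<Rightarrow> 'y::banach) \<Rightarrow> 'b set
    \<Rightarrow> 'b \<Rightarrow> ('a \<Rightarrow>\<^sub>L 'y) \<Rightarrow> bool" where
  "C1_deriv_at \<iota> F S x0 D \<longleftrightarrow>
     ((\<lambda>x. norm (F x - F x0 - blinfun_apply D (\<iota> (x - x0))) / norm (x - x0)) \<longlongrightarrow> 0)
       (at x0 within S)"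

definition frakC1 :: "('b::banach \<Rightarrow> 'a::banach) \<Rightarrow> ('b \<Rightarrow> 'y::banach) \<Rightarrow> 'b set \<Rightarrow> bool" where
  "frakC1 \<iota> F S \<longleftrightarrow> open S \<and>
     (\<exists>F'::'b \<Rightarrow> ('a \<Rightarrow>\<^sub>L 'y). (\<forall>x\<in>S. C1_deriv_at \<iota> F S x (F' x)) \<and> continuous_on S F')"

definition trans_map :: "('b \<Rightarrow> 'a) \<Rightarrow> 'm set \<Rightarrow> ('m \<Rightarrow> 'a) \<Rightarrow> ('m \<Rightarrow> 'a) \<Rightarrow> 'b \<Rightarrow> 'a" where
  "trans_map \<iota> U \<phi> \<psi> = (\<lambda>y. \<psi> (inv_into U \<phi> (\<iota> y)))"

definition trans_dom :: "('b \<Rightarrow> 'a) \<Rightarrow> 'm topology \<Rightarrow> 'm set \<Rightarrow> 'm set \<Rightarrow> ('m \<Rightarrow> 'a) \<Rightarrow> 'b set" where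
  "trans_dom \<iota> M0 U V \<phi> = \<iota> -` (\<phi> ` (U \<inter> V \<inter> topspace M0))"

text \<open>M0 is a C^1-embedded Banach submanifold of M w.r.t. the chart family A,
conditions (D1)-(D5).  The restriction of phi to U0 as a chart of M0 is
p \<mapsto> iota^{-1}(phi p).\<close>
definition C1_embedded :: "('b::banach \<Rightarrow> 'a::banach) \<Rightarrow> 'm topology \<Rightarrow> 'm topology
    \<Rightarrow> ('m set \<times> ('m \<Rightarrow> 'a)) set \<Rightarrow> bool" where
  "C1_embedded \<iota> M M0 A \<longleftrightarrow>
     banach_manifold TYPE('a) M \<and> banach_manifold TYPE('b) M0 \<and>
     dense_embedding \<iota> \<and>
     topspace M0 \<subseteq> topspace M \<and> (\<forall>U. openin M U \<longrightarrow> openin M0 (U \<inter> topspace M0)) \<and>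
     (\<forall>(U,\<phi>)\<in>A. chart M U \<phi>) \<and> topspace M \<subseteq> \<Union> (fst ` A) \<and>
     (\<forall>\<eta>\<in>topspace M0. \<forall>(U,\<phi>)\<in>A. \<eta> \<in> U \<longrightarrow>
        \<phi> ` (U \<inter> topspace M0) \<subseteq> range \<iota> \<and>
        chart M0 (U \<inter> topspace M0) (\<lambda>p. inv \<iota> (\<phi> p))) \<and>
     (\<forall>\<eta>\<in>topspace M0. \<forall>(U,\<phi>)\<in>A. \<forall>(V,\<psi>)\<in>A. \<eta> \<in> U \<inter> V \<longrightarrow>
        frakC1 \<iota> (trans_map \<iota> U \<phi> \<psi>) (trans_dom \<iota> M0 U V \<phi>) \<and>
        frakC1 \<iota> (trans_map \<iota> V \<psi> \<phi>) (trans_dom \<iota> M0 V U \<psi>))"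

definition restrict_atlas :: "('b::banach \<Rightarrow> 'a::banach) \<Rightarrow> 'm topology \<Rightarrow> ('m set \<times> ('m \<Rightarrow> 'a)) set
    \<Rightarrow> ('m set \<times> ('m \<Rightarrow> 'b)) set" where
  "restrict_atlas \<iota> M0 A = (\<lambda>(U,\<phi>). (U \<inter> topspace M0, \<lambda>p. inv \<iota> (\<phi> p))) ` A"

definition strongly_diff_at0 :: "('b::banach \<Rightarrow> 'a::banach) \<Rightarrow> ('m set \<times> ('m \<Rightarrow> 'a)) set
    \<Rightarrow> (real \<Rightarrow> 'm) \<Rightarrow> 'm \<Rightarrow> bool" where
  "strongly_diff_at0 \<iota> A f \<eta> \<longleftrightarrow>
     (\<exists>(U,\<phi>)\<in>A. \<eta> \<in> U \<and> (\<forall>\<^sub>F t in nhds 0. f t \<in> U) \<and>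
        (\<lambda>t. inv \<iota> (\<phi> (f t))) differentiable (at 0))"

end

theory Submission
  imports Defs
begin

(* Strong differentiability in one chart phi0 makes the X0-coordinates of f differentiable,
   hence f is continuous into M0 and phi0 o f is differentiable in X.  For any other chart psi,
   psi o f is the transition map G (of class frak-C^1 on an X0-open set) applied to the
   X0-coordinates k of f.  The mean value inequality along segments gives
   G (k t) - G x - G' x (iota (k t - x)) = o(norm (iota (k t - x))), and the latter is O(t),
   which is the chain rule.  Density of X0 in X makes the derivative of G unique, whence the
   transformation formula. *)

lemma C1_deriv_at_imp_has_derivative:
  assumes "bounded_linear \<iota>" "open S" "x \<in> S" "C1_deriv_at \<iota> G S x D"
  shows "(G has_derivative (\<lambda>y. blinfun_apply D (\<iota> y))) (at x)"
proof -
  have "bounded_linear (\<lambda>y. blinfun_apply D (\<iota> y))"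
    using assms(1) by (rule bounded_linear_compose[OF blinfun.bounded_linear_right])
  moreover have "at x within S = at x" using assms(3,2) by (rule at_within_open)
  ultimately show ?thesis
    using assms(4) unfolding C1_deriv_at_def has_derivative_iff_norm[of G _ x UNIV] by metis
qed

lemma C1_deriv_at_unique:
  assumes "dense_embedding \<iota>" "open S" "x \<in> S"
    and "C1_deriv_at \<iota> G S x D" "C1_deriv_at \<iota> G S x E"
  shows "D = E"
proof -
  have bl: "bounded_linear \<iota>" and dense: "closure (range \<iota>) = UNIV"
    using assms(1) by (auto simp: dense_embedding_def)
  have "(\<lambda>y. blinfun_apply D (\<iota> y)) = (\<lambda>y. blinfun_apply E (\<iota> y))"
    using assms(2-5) by (intro has_derivative_unique C1_deriv_at_imp_has_derivative bl)
  then have "range \<iota> \<subseteq> {z. blinfun_apply D z = blinfun_apply E z}" by (auto dest: fun_cong)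
  moreover have "closed {z. blinfun_apply D z = blinfun_apply E z}"
    by (intro closed_Collect_eq linear_continuous_on blinfun.bounded_linear_right)
  ultimately have "closure (range \<iota>) \<subseteq> {z. blinfun_apply D z = blinfun_apply E z}"
    by (rule closure_minimal)
  then show ?thesis using dense by (auto intro: blinfun_eqI)
qed

text \<open>Working on the segment from \<open>x\<close> to \<open>x + h\<close> rather than on \<open>B\<close> is what gives a
  bound in the weak norm \<open>norm (\<iota> h)\<close> instead of \<open>norm h\<close>.\<close>

lemma remainder_le_on_convex:
  fixes G :: "'b::banach \<Rightarrow> 'y::banach" and \<iota> :: "'b \<Rightarrow> 'a::banach"
    and G' :: "'b \<Rightarrow> ('a \<Rightarrow>\<^sub>L 'y)"
  assumes bl: "bounded_linear \<iota>"
    and der: "\<And>z. z \<in> B \<Longrightarrow> (G has_derivative (\<lambda>y. blinfun_apply (G' z) (\<iota> y))) (at z)"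
    and B: "convex B" "x \<in> B" "x + h \<in> B"
    and bnd: "\<And>z. z \<in> B \<Longrightarrow> norm (G' z - E) \<le> e"
  shows "norm (G (x + h) - G x - blinfun_apply E (\<iota> h)) \<le> e * norm (\<iota> h)"
proof -
  define z where "z = (\<lambda>s::real. x + s *\<^sub>R h)"
  define p where "p = (\<lambda>s. G (z s) - blinfun_apply E (\<iota> (z s)))"
  have zB: "z s \<in> B" if "s \<in> {0..1}" for s
  proof -
    have "z s = (1 - s) *\<^sub>R x + s *\<^sub>R (x + h)" by (simp add: z_def algebra_simps)
    then show ?thesis using B that by (simp add: convex_def)
  qed
  have p_deriv: "(p has_derivative (\<lambda>r. r *\<^sub>R blinfun_apply (G' (z s) - E) (\<iota> h)))
      (at s within {0..1})" if s: "s \<in> {0..1}" for s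
  proof -
    have z_deriv: "(z has_derivative (\<lambda>r. r *\<^sub>R h)) (at s within {0..1})"
      unfolding z_def by (auto intro!: derivative_eq_intros)
    have "(G has_derivative (\<lambda>y. blinfun_apply (G' (z s)) (\<iota> y))) (at (z s) within z ` {0..1})"
      using der zB s by (blast intro: has_derivative_at_withinI)
    then have "((\<lambda>s. G (z s)) has_derivative (\<lambda>r. blinfun_apply (G' (z s)) (\<iota> (r *\<^sub>R h))))
        (at s within {0..1})"
      using diff_chain_within[OF z_deriv] by (simp add: o_def)
    moreover have "bounded_linear (\<lambda>y. blinfun_apply E (\<iota> y))"
      using bl by (rule bounded_linear_compose[OF blinfun.bounded_linear_right])
    note bounded_linear.has_derivative[OF this z_deriv]
    ultimately have "(p has_derivative (\<lambda>r. blinfun_apply (G' (z s)) (\<iota> (r *\<^sub>R h))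
        - blinfun_apply E (\<iota> (r *\<^sub>R h)))) (at s within {0..1})"
      unfolding p_def by (rule has_derivative_diff)
    then show ?thesis
      by (simp add: linear_scale[OF bounded_linear.linear[OF bl]] blinfun.scaleR_right
          blinfun.diff_left scaleR_diff_right)
  qed
  have p_deriv_bound: "onorm (\<lambda>r. r *\<^sub>R blinfun_apply (G' (z s) - E) (\<iota> h)) \<le> e * norm (\<iota> h)"
    if s: "s \<in> {0..1}" for s
  proof -
    have "onorm (\<lambda>r::real. r *\<^sub>R blinfun_apply (G' (z s) - E) (\<iota> h))
        = norm (blinfun_apply (G' (z s) - E) (\<iota> h))"
      by (simp add: onorm_scaleR_left[OF bounded_linear_ident] onorm_id[unfolded id_def])
    also have "\<dots> \<le> norm (G' (z s) - E) * norm (\<iota> h)" by (rule norm_blinfun)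
    also have "\<dots> \<le> e * norm (\<iota> h)" by (rule mult_right_mono[OF bnd[OF zB[OF s]]]) simp
    finally show ?thesis .
  qed
  have "norm (p 1 - p 0) \<le> e * norm (\<iota> h) * norm (1 - 0::real)"
    by (rule differentiable_bound[OF convex_real_interval(5) p_deriv p_deriv_bound]) auto
  moreover have "p 1 - p 0 = G (x + h) - G x - blinfun_apply E (\<iota> h)"
    using bl by (simp add: p_def z_def linear_add[OF bounded_linear.linear[OF bl]]
        linear_0[OF bounded_linear.linear[OF bl]] blinfun.add_right algebra_simps)
  ultimately show ?thesis by simp
qed

lemma frakC1_remainder_eventually_le:
  fixes G :: "'b::banach \<Rightarrow> 'y::banach" and \<iota> :: "'b \<Rightarrow> 'a::banach"
  assumes bl: "bounded_linear \<iota>" and S: "open S" "x \<in> S"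
    and C1: "\<forall>z\<in>S. C1_deriv_at \<iota> G S z (G' z)" and cont: "continuous_on S G'"
    and e: "e > 0"
  shows "\<forall>\<^sub>F y in nhds x.
    norm (G y - G x - blinfun_apply (G' x) (\<iota> (y - x))) \<le> e * norm (\<iota> (y - x))"
proof -
  obtain d where d: "d > 0" "\<forall>z\<in>S. dist z x < d \<longrightarrow> dist (G' z) (G' x) < e"
    using cont S(2) e unfolding continuous_on_iff by blast
  obtain r where r: "r > 0" "ball x r \<subseteq> S"
    using S open_contains_ball by blast
  define B where "B = ball x (min d r)"
  have B: "convex B" "x \<in> B" "B \<subseteq> S" "open B"
    using d(1) r by (auto simp: B_def)
  have "norm (G' z - G' x) \<le> e" if "z \<in> B" for z
    using d(2) B(3) that by (force simp: B_def dist_norm norm_minus_commute)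
  moreover have "(G has_derivative (\<lambda>y. blinfun_apply (G' z) (\<iota> y))) (at z)" if "z \<in> B" for z
    using C1 B(3) that by (blast intro: C1_deriv_at_imp_has_derivative[OF bl S(1)])
  ultimately have "norm (G (x + (y - x)) - G x - blinfun_apply (G' x) (\<iota> (y - x)))
      \<le> e * norm (\<iota> (y - x))" if "y \<in> B" for y
    using that B(1,2) by (intro remainder_le_on_convex[OF bl]) auto
  then show ?thesis
    using eventually_nhds_in_open[OF B(4,2)] by (auto elim: eventually_mono)
qed

lemma has_vector_derivative_imp_eventually_norm_diff_le:
  assumes "(h has_vector_derivative v) (at t0)"
  shows "\<forall>\<^sub>F t in at t0. norm (h t - h t0) \<le> (norm v + 1) * norm (t - t0)"
proof -
  have "((\<lambda>t. norm (h t - h t0 - (t - t0) *\<^sub>R v) / norm (t - t0)) \<longlongrightarrow> 0) (at t0)"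
    using assms unfolding has_vector_derivative_def has_derivative_iff_norm by blast
  then have "\<forall>\<^sub>F t in at t0. norm (h t - h t0 - (t - t0) *\<^sub>R v) / norm (t - t0) < 1"
    by (rule order_tendstoD(2)) simp
  with eventually_neq_at_within[of t0 t0 UNIV]
  show ?thesis
  proof eventually_elim
    case (elim t)
    then have "norm (h t - h t0 - (t - t0) *\<^sub>R v) \<le> norm (t - t0)"
      by (simp add: divide_less_eq)
    moreover have "norm (h t - h t0) \<le> norm ((t - t0) *\<^sub>R v) + norm (h t - h t0 - (t - t0) *\<^sub>R v)"
      by (rule norm_triangle_sub)
    ultimately show ?case by (simp add: algebra_simps del: scaleR_left_diff_distrib)
  qed
qed

text \<open>The curve \<open>k\<close> need only be continuous in the strong topology: the remainder of \<open>G\<close> is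
  small relative to \<open>norm (\<iota> (k t - x))\<close>, which is \<open>O(t - t0)\<close>.\<close>

lemma frakC1_comp_has_vector_derivative:
  fixes G :: "'b::banach \<Rightarrow> 'y::banach" and \<iota> :: "'b \<Rightarrow> 'a::banach"
    and G' :: "'b \<Rightarrow> ('a \<Rightarrow>\<^sub>L 'y)" and k :: "real \<Rightarrow> 'b"
  assumes bl: "bounded_linear \<iota>" and S: "open S" "x \<in> S"
    and C1: "\<forall>z\<in>S. C1_deriv_at \<iota> G S z (G' z)" and cont: "continuous_on S G'"
    and k: "(k \<longlongrightarrow> x) (at t0)" "k t0 = x"
    and k_deriv: "((\<lambda>t. \<iota> (k t)) has_vector_derivative v) (at t0)"
  shows "((\<lambda>t. G (k t)) has_vector_derivative blinfun_apply (G' x) v) (at t0)"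
proof -
  define R where "R = (\<lambda>t. G (k t) - G x - blinfun_apply (G' x) (\<iota> (k t - x)))"
  have \<iota>_diff: "\<iota> (k t - x) = \<iota> (k t) - \<iota> (k t0)" for t
    using k(2) by (simp add: linear_diff[OF bounded_linear.linear[OF bl]])
  have R_small: "\<forall>\<^sub>F t in at t0. norm (R t) \<le> e * norm (\<iota> (k t - x))" if "e > 0" for e
    using eventually_compose_filterlim[OF frakC1_remainder_eventually_le[OF bl S C1 cont that] k(1)]
    by (simp add: R_def)
  have lip: "\<forall>\<^sub>F t in at t0. norm (\<iota> (k t - x)) \<le> (norm v + 1) * norm (t - t0)"
    using has_vector_derivative_imp_eventually_norm_diff_le[OF k_deriv] by (simp add: \<iota>_diff)
  have "((\<lambda>t. norm (R t - R t0 - 0) / norm (t - t0)) \<longlongrightarrow> 0) (at t0)"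
  proof (rule tendstoI)
    fix e :: real assume e: "e > 0"
    define e' where "e' = e / (norm v + 2)"
    have nv: "norm v + 2 > 0" by (simp add: add_nonneg_pos)
    have e': "e' > 0" "e' * (norm v + 1) < e"
      using e nv by (auto simp: e'_def field_simps)
    show "\<forall>\<^sub>F t in at t0. dist (norm (R t - R t0 - 0) / norm (t - t0)) 0 < e"
      using R_small[OF e'(1)] lip eventually_neq_at_within[of t0 t0 UNIV]
    proof eventually_elim
      case (elim t)
      have "norm (R t) \<le> e' * norm (\<iota> (k t - x))" by (rule elim(1))
      also have "\<dots> \<le> e' * (norm v + 1) * norm (t - t0)"
        using mult_left_mono[OF elim(2)] e'(1) by (simp add: mult.assoc)
      also have "\<dots> < e * norm (t - t0)" using e'(2) elim(3) by simp
      finally show ?case using elim(3) k(2) by (simp add: R_def divide_less_eq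
          linear_0[OF bounded_linear.linear[OF bl]])
    qed
  qed
  then have "(R has_vector_derivative 0) (at t0)"
    unfolding has_vector_derivative_def has_derivative_iff_norm by simp
  moreover have "((\<lambda>t. blinfun_apply (G' x) (\<iota> (k t))) has_vector_derivative blinfun_apply (G' x) v) (at t0)"
    by (rule bounded_linear.has_vector_derivative[OF blinfun.bounded_linear_right k_deriv])
  ultimately have "((\<lambda>t. R t + G x + (blinfun_apply (G' x) (\<iota> (k t)) - blinfun_apply (G' x) (\<iota> x)))
      has_vector_derivative (0 + 0 + (blinfun_apply (G' x) v - 0))) (at t0)"
    by (intro derivative_intros)
  then show ?thesis
    by (simp add: R_def linear_diff[OF bounded_linear.linear[OF bl]] blinfun.diff_right)
qed

lemma has_vector_derivative_transform_eventually_nhds: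
  assumes "(f has_vector_derivative f') (at x)" "\<forall>\<^sub>F y in nhds x. f y = g y"
  shows "(g has_vector_derivative f') (at x)"
proof -
  have "f x = g x" using assms(2) by (rule eventually_nhds_x_imp_x)
  then show ?thesis
    using assms has_vector_derivative_cong_ev[where S=UNIV and x=x and f=f and g=g] by simp
qed

lemma limitin_at_imp_eventually_nhds:
  assumes "limitin X f (f a) (at a)" "openin X W" "f a \<in> W"
  shows "\<forall>\<^sub>F t in nhds a. f t \<in> W"
  using assms by (simp add: limitin_def eventually_nhds_conv_at)

lemma chart_openin: "chart X U c \<Longrightarrow> openin X U"
  by (simp add: chart_def)

lemma chart_inj_on: "chart X U c \<Longrightarrow> inj_on c U"
  using homeomorphic_imp_injective_map[of "subtopology X U" _ c]
    topspace_subtopology_subset[OF openin_subset, of X U]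
  by (auto simp: chart_def)

lemma chart_tendsto:
  assumes c: "chart X U c" and "p \<in> U" and f: "limitin X f p F"
  shows "((\<lambda>t. c (f t)) \<longlongrightarrow> c p) F"
proof -
  have "\<forall>\<^sub>F t in F. f t \<in> U"
    using assms chart_openin[OF c] by (simp add: limitin_def)
  then have "limitin (subtopology X U) f p F"
    using assms by (simp add: limitin_subtopology)
  then have "limitin (top_of_set (c ` U)) (c \<circ> f) (c p) F"
    using c by (intro continuous_map_limit homeomorphic_imp_continuous_map) (auto simp: chart_def)
  then show ?thesis using c by (simp add: chart_def o_def)
qed

lemma limitin_if_chart_tendsto:
  assumes c: "chart X U c" and p: "p \<in> U" and fU: "\<forall>\<^sub>F t in F. f t \<in> U"
    and lim: "((\<lambda>t. c (f t)) \<longlongrightarrow> c p) F"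
  shows "limitin X f p F"
proof -
  obtain d where d: "homeomorphic_maps (subtopology X U) (top_of_set (c ` U)) c d"
    using c by (auto simp: chart_def homeomorphic_map_maps)
  have U: "topspace (subtopology X U) = U"
    using openin_subset[OF chart_openin[OF c]] by (simp add: Int_absorb1)
  have dc: "d (c q) = q" if "q \<in> U" for q
    using d that U by (auto simp: homeomorphic_maps_def)
  have "limitin (top_of_set (c ` U)) (c \<circ> f) (c p) F"
    using c p lim by (simp add: chart_def o_def)
  moreover have "continuous_map (top_of_set (c ` U)) (subtopology X U) d"
    using d by (simp add: homeomorphic_maps_def)
  ultimately have "limitin (subtopology X U) (d \<circ> (c \<circ> f)) (d (c p)) F"
    by (rule continuous_map_limit[rotated])
  then have "limitin (subtopology X U) (d \<circ> (c \<circ> f)) p F"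
    by (simp only: dc[OF p])
  moreover have "\<forall>\<^sub>F t in F. (d \<circ> (c \<circ> f)) t = f t"
    using fU by (rule eventually_mono) (simp add: dc)
  ultimately have "limitin (subtopology X U) f p F"
    by (rule limitin_transform_eventually[rotated])
  then show ?thesis by (simp add: limitin_subtopology)
qed

lemma C1_embedded_dense_embedding: "C1_embedded \<iota> M M0 A \<Longrightarrow> dense_embedding \<iota>"
  by (simp add: C1_embedded_def)

lemma C1_embedded_openin_Int:
  "C1_embedded \<iota> M M0 A \<Longrightarrow> openin M U \<Longrightarrow> openin M0 (U \<inter> topspace M0)"
  by (simp add: C1_embedded_def)

lemma C1_embedded_chart: "C1_embedded \<iota> M M0 A \<Longrightarrow> (U, \<phi>) \<in> A \<Longrightarrow> chart M U \<phi>"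
  unfolding C1_embedded_def by fast

lemma C1_embedded_restricted_chart:
  assumes "C1_embedded \<iota> M M0 A" "\<eta> \<in> topspace M0" "(U, \<phi>) \<in> A" "\<eta> \<in> U"
  shows "\<phi> ` (U \<inter> topspace M0) \<subseteq> range \<iota>"
    and "chart M0 (U \<inter> topspace M0) (\<lambda>p. inv \<iota> (\<phi> p))"
proof -
  have "\<forall>\<eta>\<in>topspace M0. \<forall>(U,\<phi>)\<in>A. \<eta> \<in> U \<longrightarrow>
        \<phi> ` (U \<inter> topspace M0) \<subseteq> range \<iota> \<and> chart M0 (U \<inter> topspace M0) (\<lambda>p. inv \<iota> (\<phi> p))"
    using assms(1) unfolding C1_embedded_def by (elim conjE)
  then show "\<phi> ` (U \<inter> topspace M0) \<subseteq> range \<iota>"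
    and "chart M0 (U \<inter> topspace M0) (\<lambda>p. inv \<iota> (\<phi> p))"
    using assms(2-4) by fastforce+
qed

lemma C1_embedded_transition_frakC1:
  assumes "C1_embedded \<iota> M M0 A" "\<eta> \<in> topspace M0" "(U, \<phi>) \<in> A" "(V, \<psi>) \<in> A"
    and "\<eta> \<in> U" "\<eta> \<in> V"
  shows "frakC1 \<iota> (trans_map \<iota> U \<phi> \<psi>) (trans_dom \<iota> M0 U V \<phi>)"
proof -
  have "\<forall>\<eta>\<in>topspace M0. \<forall>(U,\<phi>)\<in>A. \<forall>(V,\<psi>)\<in>A. \<eta> \<in> U \<inter> V \<longrightarrow>
        frakC1 \<iota> (trans_map \<iota> U \<phi> \<psi>) (trans_dom \<iota> M0 U V \<phi>) \<and>
        frakC1 \<iota> (trans_map \<iota> V \<psi> \<phi>) (trans_dom \<iota> M0 V U \<psi>)"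
    using assms(1) unfolding C1_embedded_def by (elim conjE)
  then show ?thesis using assms(2-6) by fastforce
qed

lemma C1_embedded_apply_inv_chart:
  assumes "C1_embedded \<iota> M M0 A" "\<eta> \<in> topspace M0" "(U, \<phi>) \<in> A" "\<eta> \<in> U"
    and "p \<in> U \<inter> topspace M0"
  shows "\<iota> (inv \<iota> (\<phi> p)) = \<phi> p"
  using C1_embedded_restricted_chart(1)[OF assms(1-4)] assms(5) by (blast intro: f_inv_into_f)

lemma C1_embedded_inv_chart_in_trans_dom:
  assumes "C1_embedded \<iota> M M0 A" "\<eta> \<in> topspace M0" "(U, \<phi>) \<in> A" "\<eta> \<in> U" "\<eta> \<in> V"
  shows "inv \<iota> (\<phi> \<eta>) \<in> trans_dom \<iota> M0 U V \<phi>"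
  using C1_embedded_apply_inv_chart[OF assms(1-4), of \<eta>] assms(2,4,5)
  by (auto simp: trans_dom_def)

lemma C1_embedded_limitin_eventually_in_chart:
  assumes "C1_embedded \<iota> M M0 A" "(U, \<phi>) \<in> A"
    and "limitin M0 f (f t0) (at t0)" "f t0 \<in> U"
  shows "\<forall>\<^sub>F t in nhds t0. f t \<in> U \<inter> topspace M0"
proof -
  have "openin M0 (U \<inter> topspace M0)"
    using assms(1,2) by (intro C1_embedded_openin_Int chart_openin C1_embedded_chart)
  then show ?thesis
    using assms(3,4) limitin_topspace[OF assms(3)] by (intro limitin_at_imp_eventually_nhds) auto
qed

lemma C1_embedded_transition_deriv_unique:
  assumes emb: "C1_embedded \<iota> M M0 A" and eta: "\<eta> \<in> topspace M0"
    and U: "(U, \<phi>) \<in> A" "\<eta> \<in> U" and V: "(V, \<psi>) \<in> A" "\<eta> \<in> V"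
    and "C1_deriv_at \<iota> (trans_map \<iota> U \<phi> \<psi>) (trans_dom \<iota> M0 U V \<phi>) (inv \<iota> (\<phi> \<eta>)) D"
    and "C1_deriv_at \<iota> (trans_map \<iota> U \<phi> \<psi>) (trans_dom \<iota> M0 U V \<phi>) (inv \<iota> (\<phi> \<eta>)) E"
  shows "D = E"
  using C1_embedded_transition_frakC1[OF emb eta U(1) V(1) U(2) V(2)]
    C1_embedded_inv_chart_in_trans_dom[OF emb eta U V(2)] assms(7,8)
  by (auto simp: frakC1_def intro: C1_deriv_at_unique[OF C1_embedded_dense_embedding[OF emb]])

text \<open>Continuity of \<open>f\<close> in \<open>M0\<close>, not merely in \<open>M\<close>, is what makes the \<open>X0\<close>-coordinates of \<open>f\<close>
  converge, so that the chain rule above applies to the transition map.\<close>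

lemma C1_embedded_transition_has_vector_derivative:
  assumes emb: "C1_embedded \<iota> M M0 A" and eta: "\<eta> \<in> topspace M0"
    and U: "(U, \<phi>) \<in> A" "\<eta> \<in> U" and V: "(V, \<psi>) \<in> A" "\<eta> \<in> V"
    and lim: "limitin M0 f \<eta> (at t0)" and ft0: "f t0 = \<eta>"
    and deriv: "((\<lambda>t. \<phi> (f t)) has_vector_derivative w) (at t0)"
  obtains D where "C1_deriv_at \<iota> (trans_map \<iota> U \<phi> \<psi>) (trans_dom \<iota> M0 U V \<phi>) (inv \<iota> (\<phi> \<eta>)) D"
    and "((\<lambda>t. \<psi> (f t)) has_vector_derivative blinfun_apply D w) (at t0)"
proof -
  define S where "S = trans_dom \<iota> M0 U V \<phi>"
  define G where "G = trans_map \<iota> U \<phi> \<psi>"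
  define c where "c = (\<lambda>p. inv \<iota> (\<phi> p))"
  have bl: "bounded_linear \<iota>"
    using C1_embedded_dense_embedding[OF emb] by (simp add: dense_embedding_def)
  obtain G' where S: "open S" and C1: "\<forall>x\<in>S. C1_deriv_at \<iota> G S x (G' x)"
    and cont: "continuous_on S G'"
    using C1_embedded_transition_frakC1[OF emb eta U(1) V(1) U(2) V(2)]
    unfolding frakC1_def S_def G_def by blast
  have \<iota>_c: "\<iota> (c p) = \<phi> p" and G_c: "G (c p) = \<psi> p" if "p \<in> U \<inter> topspace M0" for p
    using C1_embedded_apply_inv_chart[OF emb eta U that] chart_inj_on[OF C1_embedded_chart[OF emb U(1)]]
      that by (auto simp: c_def G_def trans_map_def inv_into_f_f)
  have near: "\<forall>\<^sub>F t in nhds t0. f t \<in> U \<inter> topspace M0"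
    using C1_embedded_limitin_eventually_in_chart[OF emb U(1), of f t0] lim U(2) ft0 by simp
  have "c \<eta> \<in> S"
    using C1_embedded_inv_chart_in_trans_dom[OF emb eta U V(2)] by (simp add: c_def S_def)
  moreover have "((\<lambda>t. c (f t)) \<longlongrightarrow> c \<eta>) (at t0)"
    using chart_tendsto[OF C1_embedded_restricted_chart(2)[OF emb eta U] _ lim] U(2) eta
    by (simp add: c_def)
  moreover have "((\<lambda>t. \<iota> (c (f t))) has_vector_derivative w) (at t0)"
    using near by (intro has_vector_derivative_transform_eventually_nhds[OF deriv])
      (auto elim!: eventually_mono simp: \<iota>_c)
  ultimately have "((\<lambda>t. G (c (f t))) has_vector_derivative blinfun_apply (G' (c \<eta>)) w) (at t0)"
    by (intro frakC1_comp_has_vector_derivative[OF bl S(1) _ C1 cont]) (simp_all add: ft0)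
  then have "((\<lambda>t. \<psi> (f t)) has_vector_derivative blinfun_apply (G' (c \<eta>)) w) (at t0)"
    using near by (elim has_vector_derivative_transform_eventually_nhds)
      (auto elim!: eventually_mono simp: G_c)
  moreover have "C1_deriv_at \<iota> G S (c \<eta>) (G' (c \<eta>))" using C1 \<open>c \<eta> \<in> S\<close> by blast
  ultimately show ?thesis using that by (simp add: G_def S_def c_def)
qed

lemma C1_embedded_transition_differentiable:
  fixes f :: "real \<Rightarrow> 'm"
  assumes "C1_embedded \<iota> M M0 A" "\<eta> \<in> topspace M0"
    and "(U, \<phi>) \<in> A" "\<eta> \<in> U" "(V, \<psi>) \<in> A" "\<eta> \<in> V"
    and "limitin M0 f \<eta> (at t0)" "f t0 = \<eta>"
    and "(\<lambda>t. \<phi> (f t)) differentiable (at t0)"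
  shows "(\<lambda>t. \<psi> (f t)) differentiable (at t0)"
proof -
  have "((\<lambda>t. \<phi> (f t)) has_vector_derivative vector_derivative (\<lambda>t. \<phi> (f t)) (at t0)) (at t0)"
    using assms(9) by (simp add: vector_derivative_works[symmetric])
  then show ?thesis
    by (rule C1_embedded_transition_has_vector_derivative[OF assms(1-8)])
      (rule differentiableI_vector)
qed

lemma C1_embedded_transition_vector_derivative:
  assumes emb: "C1_embedded \<iota> M M0 A" and eta: "\<eta> \<in> topspace M0"
    and U: "(U, \<phi>) \<in> A" "\<eta> \<in> U" and V: "(V, \<psi>) \<in> A" "\<eta> \<in> V"
    and "limitin M0 f \<eta> (at t0)" "f t0 = \<eta>"
    and "(\<lambda>t. \<phi> (f t)) differentiable (at t0)"
    and D: "C1_deriv_at \<iota> (trans_map \<iota> U \<phi> \<psi>) (trans_dom \<iota> M0 U V \<phi>) (inv \<iota> (\<phi> \<eta>)) D"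
  shows "vector_derivative (\<lambda>t. \<psi> (f t)) (at t0)
    = blinfun_apply D (vector_derivative (\<lambda>t. \<phi> (f t)) (at t0))"
proof -
  have "((\<lambda>t. \<phi> (f t)) has_vector_derivative vector_derivative (\<lambda>t. \<phi> (f t)) (at t0)) (at t0)"
    using assms(9) by (simp add: vector_derivative_works[symmetric])
  then obtain E where E: "C1_deriv_at \<iota> (trans_map \<iota> U \<phi> \<psi>) (trans_dom \<iota> M0 U V \<phi>) (inv \<iota> (\<phi> \<eta>)) E"
    and "((\<lambda>t. \<psi> (f t)) has_vector_derivative
      blinfun_apply E (vector_derivative (\<lambda>t. \<phi> (f t)) (at t0))) (at t0)"
    by (rule C1_embedded_transition_has_vector_derivative[OF assms(1-8)])
  then show ?thesis
    using C1_embedded_transition_deriv_unique[OF emb eta U V D E] by (simp add: vector_derivative_at)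
qed

lemma strongly_diff_at0E:
  assumes emb: "C1_embedded \<iota> M M0 A" and eta: "\<eta> \<in> topspace M0"
    and in_M0: "\<forall>\<^sub>F t in nhds 0. f t \<in> topspace M0" and f0: "f 0 = \<eta>"
    and strong: "strongly_diff_at0 \<iota> A f \<eta>"
  obtains U0 \<phi>0 where "(U0, \<phi>0) \<in> A" "\<eta> \<in> U0" "limitin M0 f \<eta> (at 0)"
    and "(\<lambda>t. \<phi>0 (f t)) differentiable (at 0)"
proof -
  obtain U0 \<phi>0 where U0: "(U0, \<phi>0) \<in> A" "\<eta> \<in> U0" and in_U0: "\<forall>\<^sub>F t in nhds 0. f t \<in> U0"
    and g: "(\<lambda>t. inv \<iota> (\<phi>0 (f t))) differentiable (at 0)"
    using strong unfolding strongly_diff_at0_def by blast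
  have bl: "bounded_linear \<iota>"
    using C1_embedded_dense_embedding[OF emb] by (simp add: dense_embedding_def)
  have near: "\<forall>\<^sub>F t in nhds 0. f t \<in> U0 \<inter> topspace M0"
    using in_U0 in_M0 by eventually_elim simp
  have "((\<lambda>t. inv \<iota> (\<phi>0 (f t))) \<longlongrightarrow> inv \<iota> (\<phi>0 \<eta>)) (at 0)"
    using differentiable_imp_continuous_within[OF g] f0 by (simp add: continuous_at)
  then have "limitin M0 f \<eta> (at 0)"
    using near U0(2) eta
    by (intro limitin_if_chart_tendsto[OF C1_embedded_restricted_chart(2)[OF emb eta U0]])
      (auto simp: eventually_nhds_conv_at)
  moreover have "(\<lambda>t. \<phi>0 (f t)) differentiable (at 0)"
  proof -
    have "((\<lambda>t. \<iota> (inv \<iota> (\<phi>0 (f t)))) has_vector_derivative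
        \<iota> (vector_derivative (\<lambda>t. inv \<iota> (\<phi>0 (f t))) (at 0))) (at 0)"
      using g by (intro bounded_linear.has_vector_derivative[OF bl])
        (simp add: vector_derivative_works[symmetric])
    then have "((\<lambda>t. \<phi>0 (f t)) has_vector_derivative
        \<iota> (vector_derivative (\<lambda>t. inv \<iota> (\<phi>0 (f t))) (at 0))) (at 0)"
      using near by (elim has_vector_derivative_transform_eventually_nhds)
        (auto elim!: eventually_mono simp: C1_embedded_apply_inv_chart[OF emb eta U0])
    then show ?thesis by (rule differentiableI_vector)
  qed
  ultimately show ?thesis using that U0 by blast
qed

theorem lemma2p7:
  fixes \<iota> :: "'b::banach \<Rightarrow> 'a::banach"
    and \<iota>1 :: "'c::banach \<Rightarrow> 'b"
    and M M0 M1 :: "'m topology"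
    and A :: "('m set \<times> ('m \<Rightarrow> 'a)) set"
    and f :: "real \<Rightarrow> 'm" and \<eta> :: 'm and \<epsilon> :: real
  assumes emb: "C1_embedded \<iota> M M0 A"
    and spread: "C1_embedded \<iota>1 M0 M1 (restrict_atlas \<iota> M0 A)"
    and eta: "\<eta> \<in> topspace M0"
    and eps: "\<epsilon> > 0"
    and fM0: "\<forall>t\<in>{-\<epsilon><..<\<epsilon>}. f t \<in> topspace M0"
    and f0: "f 0 = \<eta>"
    and strong: "strongly_diff_at0 \<iota> A f \<eta>"
  shows "(\<forall>(U,\<phi>)\<in>A. \<eta> \<in> U \<longrightarrow>
            (\<forall>\<^sub>F t in nhds 0. f t \<in> U) \<and> (\<lambda>t. \<phi> (f t)) differentiable (at 0)) \<and>
         (\<forall>(U,\<phi>)\<in>A. \<forall>(V,\<psi>)\<in>A. \<eta> \<in> U \<and> \<eta> \<in> V \<longrightarrow>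
            (\<forall>D. C1_deriv_at \<iota> (trans_map \<iota> U \<phi> \<psi>) (trans_dom \<iota> M0 U V \<phi>) (inv \<iota> (\<phi> \<eta>)) D \<longrightarrow>
               vector_derivative (\<lambda>t. \<psi> (f t)) (at 0)
                 = blinfun_apply D (vector_derivative (\<lambda>t. \<phi> (f t)) (at 0))))"
proof -
  have "\<forall>\<^sub>F t in nhds 0. f t \<in> topspace M0"
    using eventually_nhds_in_open[of "{-\<epsilon><..<\<epsilon>}" 0] eps fM0 by (auto elim: eventually_mono)
  then obtain U0 \<phi>0 where U0: "(U0, \<phi>0) \<in> A" "\<eta> \<in> U0" and lim: "limitin M0 f \<eta> (at 0)"
    and diff0: "(\<lambda>t. \<phi>0 (f t)) differentiable (at 0)"
    using strongly_diff_at0E[OF emb eta _ f0 strong] by blast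
  have "(\<forall>\<^sub>F t in nhds 0. f t \<in> U) \<and> (\<lambda>t. \<phi> (f t)) differentiable (at 0)"
    if U: "(U, \<phi>) \<in> A" "\<eta> \<in> U" for U \<phi>
    using C1_embedded_limitin_eventually_in_chart[OF emb U(1), of f 0] lim f0 U(2)
      C1_embedded_transition_differentiable[OF emb eta U0 U lim f0 diff0]
    by (auto elim: eventually_mono)
  then show ?thesis
    using C1_embedded_transition_vector_derivative[OF emb eta _ _ _ _ lim f0] by fast
qed

end
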